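(* Let $\mathtt b\ge2$ and let $(\mathtt T_u,r(u))$, $u\in S$, be a finite family of finite rooted graph trees; write $|x|$ for the graph distance from $r(u)$ to $x\in\mathtt T_u$ and, for $1\le i\le|x|$, $x_i$ for the ancestor of $x$ at height $i$. Let $V^u_x$, $x\in\mathtt T_u$, $u\in S$, be independent uniform random variables on $\{1,\dots,\mathtt b\}$, set $Z^u_x=(V^u_{x_1},\dots,V^u_{x_{|x|}})\in\mathbb W_{\mathtt b}$ (with $Z^u_{r(u)}=\varnothing$) and $\mathtt R_u=\{Z^u_x;x\in\mathtt T_u\}$. For $c\in\mathbb N^*$ let $M_c=\sum_{u\in S}\#\{x\in\mathtt T_u:|x|\le c\}$. Let $w_u\in\mathbb W_{\mathtt b}$, $u\in S$ be deterministic. Then there exists an event $A_c$ with $\mathbf P(A_c)\le\mathtt b^{-c}M_c^2$ such that on the complement of $A_c$, $$0\le\sum_{u\in S}\#\mathtt R_u-\#\Big(\bigcup_{u\in S}w_u\ast\mathtt R_u\Big)\le M_c.$$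
   Context: $\mathbb W_{\mathtt b}$ is the set of finite words over $\{1,\dots,\mathtt b\}$; $w\ast v$ denotes concatenation of words and $w\ast\mathtt R=\{w\ast v;v\in\mathtt R\}$. *)

theory Defs
  imports "HOL-Probability.Probability"
begin

text \<open>Finite rooted trees are represented (up to isomorphism) as finite, nonempty,
 prefix-closed sets of words over nat (Ulam--Harris labelling); the root is the
 empty list, the height is the length, and the ancestor of x at height i is take i x.\<close>
definition finite_rooted_tree :: "nat list set \<Rightarrow> bool" where
  "finite_rooted_tree T \<longleftrightarrow> finite T \<and> [] \<in> T \<and> (\<forall>x\<in>T. \<forall>i. take i x \<in> T)"

definition words :: "nat \<Rightarrow> nat list set" where
  "words b = {w. set w \<subseteq> {1..b}}"

definition word_cat :: "nat list \<Rightarrow> nat list set \<Rightarrow> nat list set" where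
  "word_cat w R = (\<lambda>v. w @ v) ` R"

definition label_index :: "'u set \<Rightarrow> ('u \<Rightarrow> nat list set) \<Rightarrow> ('u \<times> nat list) set" where
  "label_index S T = {(u, x). u \<in> S \<and> x \<in> T u}"

definition label_law :: "nat \<Rightarrow> 'u set \<Rightarrow> ('u \<Rightarrow> nat list set) \<Rightarrow> (('u \<times> nat list) \<Rightarrow> nat) pmf" where
  "label_law b S T = pmf_of_set (PiE (label_index S T) (\<lambda>_. {1..b}))"

definition Zword :: "(('u \<times> nat list) \<Rightarrow> nat) \<Rightarrow> 'u \<Rightarrow> nat list \<Rightarrow> nat list" where
  "Zword V u x = map (\<lambda>i. V (u, take i x)) [1..<Suc (length x)]"

definition Rset :: "(('u \<times> nat list) \<Rightarrow> nat) \<Rightarrow> ('u \<Rightarrow> nat list set) \<Rightarrow> 'u \<Rightarrow> nat list set" where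
  "Rset V T u = Zword V u ` T u"

definition Mc :: "'u set \<Rightarrow> ('u \<Rightarrow> nat list set) \<Rightarrow> nat \<Rightarrow> nat" where
  "Mc S T c = (\<Sum>u\<in>S. card {x \<in> T u. length x \<le> c})"

end

theory Submission
  imports Defs "HOL-Library.Sublist"
begin

(* Concatenation is injective, so the union has at most \<Sum>u #R_u elements. Conversely, if the
   words w_u * Z^u_x and w_u' * Z^u'_x' of vertices above height c in different trees coincide,
   then after truncating x and x' to height c one of the two words is a prefix of the other.
   For a fixed such pair of height-c vertices this prescribes the c labels along x, which are
   independent of the labels of the other tree: probability at most b^-c. Outside the union A_c
   of these at most M_c^2 events, only the (at most M_c) vertices of height \<le> c can be lost
   in the union. *)

lemma Zword_length [simp]: "length (Zword V u x) = length x"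
  by (simp add: Zword_def del: upt_Suc)

lemma Zword_nth: "k < length x \<Longrightarrow> Zword V u x ! k = V (u, take (Suc k) x)"
  by (simp add: Zword_def del: upt_Suc)

lemma Zword_take: "Zword V u (take i x) = take i (Zword V u x)"
  by (rule nth_equalityI) (simp_all add: Zword_nth)

lemma Zword_eq_iff:
  "Zword V u x = Zword V' u x \<longleftrightarrow> (\<forall>i\<in>{1..length x}. V (u, take i x) = V' (u, take i x))"
  by (auto simp: Zword_def)

lemma prefix_append_take:
  assumes "length xs \<le> length xs'" and "xs @ ys = xs' @ ys'"
  shows "prefix (xs @ take c ys) (xs' @ take c ys')"
proof -
  have "xs @ take c ys = take (length xs + c) (xs @ ys)"
    by simp
  also have "\<dots> = take (length xs + c) (xs' @ take c ys')"
    using assms by (auto simp: min_def)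
  finally show ?thesis
    by (metis take_is_prefix)
qed

lemma prob_uniform_PiE_le_if_inj_restrict:
  assumes "finite I" and "finite B" and "B \<noteq> {}" and "J \<subseteq> I"
    and inj: "inj_on (\<lambda>V. restrict V (I - J)) (A \<inter> PiE I (\<lambda>_. B))"
  shows "measure_pmf.prob (pmf_of_set (PiE I (\<lambda>_. B))) A \<le> 1 / real (card B) ^ card J"
proof -
  let ?X = "PiE I (\<lambda>_. B)"
  have "finite ?X" and "?X \<noteq> {}"
    using assms by (simp_all add: finite_PiE PiE_eq_empty_iff)
  have "(\<lambda>V. restrict V (I - J)) ` (A \<inter> ?X) \<subseteq> PiE (I - J) (\<lambda>_. B)"
    by (auto simp: PiE_def Pi_def)
  then have "card (A \<inter> ?X) \<le> card (PiE (I - J) (\<lambda>_. B))"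
    using inj \<open>finite I\<close> \<open>finite B\<close> by (intro card_inj_on_le) (simp_all add: finite_PiE)
  also have "\<dots> = card B ^ (card I - card J)"
    using assms by (simp add: card_PiE card_Diff_subset finite_subset)
  finally have "real (card (A \<inter> ?X)) * card B ^ card J
      \<le> real (card B ^ (card I - card J) * card B ^ card J)"
    by (simp add: mult_right_mono flip: of_nat_le_iff)
  also have "card B ^ (card I - card J) * card B ^ card J = card ?X"
    using assms by (simp add: card_PiE card_mono flip: power_add)
  finally have "real (card (A \<inter> ?X)) / card ?X \<le> 1 / real (card B) ^ card J"
    using \<open>finite ?X\<close> \<open>?X \<noteq> {}\<close> assms(3) \<open>finite B\<close>
    by (simp add: field_simps card_gt_0_iff)
  then show ?thesis
    using \<open>finite ?X\<close> \<open>?X \<noteq> {}\<close> by (simp add: measure_pmf_of_set Int_commute)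
qed

lemma prefix_same_length_eq: "prefix xs zs \<Longrightarrow> prefix ys zs \<Longrightarrow> length xs = length ys \<Longrightarrow> xs = ys"
  by (metis prefix_length_prefix prefix_order.antisym order_refl)

lemma prob_prefix_Zword_le:
  assumes "finite I" and "b \<ge> 1" and "u \<noteq> u'"
    and ancestors: "(\<lambda>i. (u, take i x)) ` {1..length x} \<subseteq> I"
  shows "measure_pmf.prob (pmf_of_set (PiE I (\<lambda>_. {1..b})))
           {V. prefix (a @ Zword V u x) (a' @ Zword V u' x')} \<le> 1 / real b ^ length x"
proof -
  define J where "J = (\<lambda>i. (u, take i x)) ` {1..length x}"
  have "inj_on (\<lambda>i. take i x) {1..length x}"
    by (rule inj_onI) (metis atLeastAtMost_iff length_take min_absorb2)
  then have "card J = length x"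
    by (simp add: J_def card_image inj_on_def)
  have "inj_on (\<lambda>V. restrict V (I - J))
          ({V. prefix (a @ Zword V u x) (a' @ Zword V u' x')} \<inter> PiE I (\<lambda>_. {1..b}))"
  proof (rule inj_onI)
    fix V1 V2
    assume V1: "V1 \<in> {V. prefix (a @ Zword V u x) (a' @ Zword V u' x')} \<inter> PiE I (\<lambda>_. {1..b})"
      and V2: "V2 \<in> {V. prefix (a @ Zword V u x) (a' @ Zword V u' x')} \<inter> PiE I (\<lambda>_. {1..b})"
      and restrict_eq: "restrict V1 (I - J) = restrict V2 (I - J)"
    have outside_J: "V1 k = V2 k" if "k \<notin> J" for k
    proof (cases "k \<in> I")
      case True
      with that show ?thesis
        using fun_cong[OF restrict_eq, of k] by simp
    next
      case False
      have "V1 \<in> PiE I (\<lambda>_. {1..b})" and "V2 \<in> PiE I (\<lambda>_. {1..b})"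
        using V1 V2 by blast+
      then show ?thesis
        using PiE_arb False by metis
    qed
    have "Zword V1 u' x' = Zword V2 u' x'"
      unfolding Zword_eq_iff by (intro ballI outside_J) (use \<open>u \<noteq> u'\<close> in \<open>auto simp: J_def\<close>)
    with V1 V2 have "a @ Zword V1 u x = a @ Zword V2 u x"
      by (intro prefix_same_length_eq[of _ "a' @ Zword V2 u' x'"]) simp_all
    then have "V1 k = V2 k" if "k \<in> J" for k
      using that by (auto simp: Zword_eq_iff J_def)
    with outside_J show "V1 = V2"
      by blast
  qed
  moreover have "J \<subseteq> I"
    using ancestors by (simp add: J_def)
  ultimately show ?thesis
    using prob_uniform_PiE_le_if_inj_restrict[of I "{1..b}" J] \<open>finite I\<close> \<open>b \<ge> 1\<close> \<open>card J = length x\<close>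
    by simp
qed

lemma finite_rooted_tree_finite: "finite_rooted_tree T \<Longrightarrow> finite T"
  by (simp add: finite_rooted_tree_def)

lemma finite_rooted_tree_take: "finite_rooted_tree T \<Longrightarrow> x \<in> T \<Longrightarrow> take i x \<in> T"
  by (simp add: finite_rooted_tree_def)

fun prefix_collision ::
    "('u \<Rightarrow> nat list) \<Rightarrow> 'u \<times> nat list \<Rightarrow> 'u \<times> nat list \<Rightarrow> (('u \<times> nat list) \<Rightarrow> nat) set" where
  "prefix_collision w (u, x) (u', x') =
     {V. u \<noteq> u' \<and> prefix (w u @ Zword V u x) (w u' @ Zword V u' x')}"

definition level :: "'u set \<Rightarrow> ('u \<Rightarrow> nat list set) \<Rightarrow> nat \<Rightarrow> ('u \<times> nat list) set" where
  "level S T c = (SIGMA u:S. {x \<in> T u. length x = c})"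

definition collision_event ::
    "('u \<Rightarrow> nat list) \<Rightarrow> 'u set \<Rightarrow> ('u \<Rightarrow> nat list set) \<Rightarrow> nat \<Rightarrow> (('u \<times> nat list) \<Rightarrow> nat) set" where
  "collision_event w S T c = (\<Union>(p, p') \<in> level S T c \<times> level S T c. prefix_collision w p p')"

lemma card_level_le_Mc:
  assumes "finite S" and "\<And>u. u \<in> S \<Longrightarrow> finite (T u)"
  shows "card (level S T c) \<le> Mc S T c"
  unfolding level_def Mc_def using assms by simp (intro sum_mono card_mono; auto)

lemma prob_collision_event_le:
  assumes "b \<ge> 1" and "finite S" and trees: "\<And>u. u \<in> S \<Longrightarrow> finite_rooted_tree (T u)"
  shows "measure_pmf.prob (label_law b S T) (collision_event w S T c)
           \<le> real (Mc S T c) ^ 2 / real b ^ c"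
proof -
  let ?L = "level S T c"
  have finite_T: "finite (T u)" if "u \<in> S" for u
    using trees[OF that] by (rule finite_rooted_tree_finite)
  have "label_index S T = Sigma S T"
    by (auto simp: label_index_def)
  then have "finite (label_index S T)"
    using \<open>finite S\<close> finite_T by simp
  have pair_le: "measure_pmf.prob (label_law b S T) (prefix_collision w p p') \<le> 1 / real b ^ c"
    if "p \<in> ?L" for p p'
  proof -
    obtain u x u' x' where p: "p = (u, x)" and p': "p' = (u', x')"
      by force
    with that have "u \<in> S" and "x \<in> T u" and "length x = c"
      by (auto simp: level_def)
    then have ancestors: "(\<lambda>i. (u, take i x)) ` {1..length x} \<subseteq> label_index S T"
      using trees by (auto simp: label_index_def finite_rooted_tree_take)
    show ?thesis
    proof (cases "u = u'")
      case True
      then show ?thesis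
        by (simp add: p p')
    next
      case False
      then show ?thesis
        using prob_prefix_Zword_le[OF \<open>finite (label_index S T)\<close> \<open>b \<ge> 1\<close> False ancestors]
        by (simp add: p p' label_law_def \<open>length x = c\<close>)
    qed
  qed
  have "finite ?L"
    using \<open>finite S\<close> finite_T by (simp add: level_def)
  then have "measure_pmf.prob (label_law b S T) (collision_event w S T c)
      \<le> (\<Sum>(p, p') \<in> ?L \<times> ?L. measure_pmf.prob (label_law b S T) (prefix_collision w p p'))"
    unfolding collision_event_def
    using measure_pmf.finite_measure_subadditive_finite[of "?L \<times> ?L" "case_prod (prefix_collision w)"]
    by (simp add: prod.case_distrib)
  also have "\<dots> \<le> (\<Sum>(p, p') \<in> ?L \<times> ?L. 1 / real b ^ c)"
    by (intro sum_mono) (auto intro: pair_le)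
  also have "\<dots> = real (card ?L) ^ 2 / real b ^ c"
    by (simp add: card_cartesian_product power2_eq_square)
  also have "\<dots> \<le> real (Mc S T c) ^ 2 / real b ^ c"
    using card_level_le_Mc[OF \<open>finite S\<close> finite_T]
    by (intro divide_right_mono power_mono) simp_all
  finally show ?thesis .
qed

lemma prefix_collision_of_eq_words:
  assumes "u \<noteq> u'" and eq: "w u @ Zword V u x = w u' @ Zword V u' x'"
  shows "V \<in> prefix_collision w (u, take c x) (u', take c x')
           \<union> prefix_collision w (u', take c x') (u, take c x)"
proof (cases "length (w u) \<le> length (w u')")
  case True
  then show ?thesis
    using \<open>u \<noteq> u'\<close> prefix_append_take[OF True eq, of c] by (simp add: Zword_take)
next
  case False
  then have le: "length (w u') \<le> length (w u)"
    by simp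
  show ?thesis
    using \<open>u \<noteq> u'\<close> prefix_append_take[OF le eq[symmetric], of c] by (simp add: Zword_take)
qed

lemma sum_card_image_le_card_UN_plus:
  assumes "finite S" and finite_T: "\<And>u. u \<in> S \<Longrightarrow> finite (T u)"
    and disjoint: "\<And>u u'. u \<in> S \<Longrightarrow> u' \<in> S \<Longrightarrow> u \<noteq> u' \<Longrightarrow>
                     f u ` {x \<in> T u. P u x} \<inter> f u' ` {x \<in> T u'. P u' x} = {}"
  shows "(\<Sum>u\<in>S. card (f u ` T u))
           \<le> card (\<Union>u\<in>S. f u ` T u) + (\<Sum>u\<in>S. card {x \<in> T u. \<not> P u x})"
proof -
  have "(\<Sum>u\<in>S. card (f u ` T u))
      \<le> (\<Sum>u\<in>S. card (f u ` {x \<in> T u. P u x}) + card {x \<in> T u. \<not> P u x})"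
  proof (rule sum_mono)
    fix u
    assume "u \<in> S"
    have "f u ` T u = f u ` {x \<in> T u. P u x} \<union> f u ` {x \<in> T u. \<not> P u x}"
      by auto
    then have "card (f u ` T u) \<le> card (f u ` {x \<in> T u. P u x}) + card (f u ` {x \<in> T u. \<not> P u x})"
      by (metis card_Un_le)
    also have "card (f u ` {x \<in> T u. \<not> P u x}) \<le> card {x \<in> T u. \<not> P u x}"
      using finite_T[OF \<open>u \<in> S\<close>] by (simp add: card_image_le)
    finally show "card (f u ` T u) \<le> card (f u ` {x \<in> T u. P u x}) + card {x \<in> T u. \<not> P u x}"
      by simp
  qed
  also have "\<dots> = card (\<Union>u\<in>S. f u ` {x \<in> T u. P u x}) + (\<Sum>u\<in>S. card {x \<in> T u. \<not> P u x})"
    using assms by (simp add: sum.distrib card_UN_disjoint)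
  also have "card (\<Union>u\<in>S. f u ` {x \<in> T u. P u x}) \<le> card (\<Union>u\<in>S. f u ` T u)"
    using assms by (intro card_mono) auto
  finally show ?thesis
    by simp
qed

lemma word_cat_Rset: "word_cat (w u) (Rset V T u) = (\<lambda>x. w u @ Zword V u x) ` T u"
  by (simp add: word_cat_def Rset_def image_image)

lemma card_word_cat [simp]: "card (word_cat w R) = card R"
  by (simp add: word_cat_def card_image inj_on_def)

lemma card_UN_word_cat_Rset_le:
  "finite S \<Longrightarrow> card (\<Union>u\<in>S. word_cat (w u) (Rset V T u)) \<le> (\<Sum>u\<in>S. card (Rset V T u))"
  using card_UN_le[of S "\<lambda>u. word_cat (w u) (Rset V T u)"] by simp

lemma sum_card_Rset_le_outside_collision_event:
  assumes "finite S" and trees: "\<And>u. u \<in> S \<Longrightarrow> finite_rooted_tree (T u)"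
    and "V \<notin> collision_event w S T c"
  shows "(\<Sum>u\<in>S. card (Rset V T u)) \<le> card (\<Union>u\<in>S. word_cat (w u) (Rset V T u)) + Mc S T c"
proof -
  let ?f = "\<lambda>u x. w u @ Zword V u x"
  have "?f u ` {x \<in> T u. c < length x} \<inter> ?f u' ` {x \<in> T u'. c < length x} = {}"
    if "u \<in> S" and "u' \<in> S" and "u \<noteq> u'" for u u'
  proof (rule ccontr)
    assume "?f u ` {x \<in> T u. c < length x} \<inter> ?f u' ` {x \<in> T u'. c < length x} \<noteq> {}"
    then obtain x x' where "x \<in> T u" "c < length x" "x' \<in> T u'" "c < length x'"
      and eq: "?f u x = ?f u' x'"
      by auto
    then have "(u, take c x) \<in> level S T c" and "(u', take c x') \<in> level S T c"
      using that trees by (auto simp: level_def finite_rooted_tree_take)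
    with prefix_collision_of_eq_words[OF \<open>u \<noteq> u'\<close> eq, of c]
    have "V \<in> collision_event w S T c"
      unfolding collision_event_def by blast
    with \<open>V \<notin> collision_event w S T c\<close> show False
      by contradiction
  qed
  from sum_card_image_le_card_UN_plus[of S T, OF \<open>finite S\<close> finite_rooted_tree_finite[OF trees] this]
  show ?thesis
    by (simp add: Mc_def not_less flip: word_cat_Rset)
qed

theorem lemma3p9:
  fixes b c :: nat and S :: "'u set" and T :: "'u \<Rightarrow> nat list set" and w :: "'u \<Rightarrow> nat list"
  assumes "b \<ge> 2" and "c \<ge> 1" and "finite S"
    and "\<And>u. u \<in> S \<Longrightarrow> finite_rooted_tree (T u)"
    and "\<And>u. u \<in> S \<Longrightarrow> w u \<in> words b"
  shows "\<exists>A. A \<subseteq> PiE (label_index S T) (\<lambda>_. {1..b})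
           \<and> measure_pmf.prob (label_law b S T) A \<le> real b powi (- int c) * real (Mc S T c) ^ 2
           \<and> (\<forall>V \<in> PiE (label_index S T) (\<lambda>_. {1..b}) - A.
                0 \<le> (\<Sum>u\<in>S. int (card (Rset V T u))) - int (card (\<Union>u\<in>S. word_cat (w u) (Rset V T u)))
              \<and> (\<Sum>u\<in>S. int (card (Rset V T u))) - int (card (\<Union>u\<in>S. word_cat (w u) (Rset V T u)))
                  \<le> int (Mc S T c))"
proof -
  let ?A = "PiE (label_index S T) (\<lambda>_. {1..b}) \<inter> collision_event w S T c"
  have "measure_pmf.prob (label_law b S T) ?A
      \<le> measure_pmf.prob (label_law b S T) (collision_event w S T c)"
    by (intro measure_pmf.finite_measure_mono) auto
  also have "\<dots> \<le> real (Mc S T c) ^ 2 / real b ^ c"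
    using assms by (intro prob_collision_event_le) simp_all
  also have "\<dots> = real b powi (- int c) * real (Mc S T c) ^ 2"
    by (simp add: power_int_minus field_simps)
  finally have "measure_pmf.prob (label_law b S T) ?A \<le> real b powi (- int c) * real (Mc S T c) ^ 2" .
  moreover have "card (\<Union>u\<in>S. word_cat (w u) (Rset V T u)) \<le> (\<Sum>u\<in>S. card (Rset V T u))
      \<and> (\<Sum>u\<in>S. card (Rset V T u)) \<le> card (\<Union>u\<in>S. word_cat (w u) (Rset V T u)) + Mc S T c"
    if "V \<notin> collision_event w S T c" for V
    using card_UN_word_cat_Rset_le sum_card_Rset_le_outside_collision_event assms(3,4) that by blast
  ultimately show ?thesis
    by (intro exI[of _ ?A]) (force simp flip: of_nat_sum)
qed

end
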